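(* Let $R$ be a reduced ring. Then the trivial extension $T(R,R)$ is almost Armendariz.
   Context: All rings are associative with identity. A ring is reduced if it has no nonzero nilpotent elements. For a ring $R$ and an $R$-bimodule $M$, the trivial extension $T(R,M)$ is $R\times M$ with componentwise addition and multiplication $(r_1,m_1)(r_2,m_2)=(r_1r_2, r_1m_2+m_1r_2)$; it is isomorphic to the ring of matrices $\begin{pmatrix} r& m\\ 0& r\end{pmatrix}$, $r\in R$, $m\in M$. For a ring $R$, $P(R)$ denotes the prime radical of $R$ (the intersection of all prime ideals of $R$, equivalently the set of strongly nilpotent elements of $R$). A ring $R$ is called almost Armendariz if whenever $f(x)=\sum_{i=0}^m a_ix^i$ and $g(x)=\sum_{j=0}^n b_jx^j\in R[x]$ satisfy $f(x)g(x)=0$, then $a_ib_j\in P(R)$ for all $0\le i\le m$, $0\le j\le n$. *)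

theory Defs
  imports Main
begin

definition reduced :: "'a::ring_1 itself \<Rightarrow> bool" where
  "reduced _ \<longleftrightarrow> (\<forall>x::'a. (\<exists>n. x ^ n = 0) \<longrightarrow> x = 0)"

definition two_sided_ideal :: "'a::ring_1 set \<Rightarrow> bool" where
  "two_sided_ideal I \<longleftrightarrow> 0 \<in> I \<and> (\<forall>x\<in>I. \<forall>y\<in>I. x + y \<in> I) \<and> (\<forall>x\<in>I. - x \<in> I)
     \<and> (\<forall>r x. x \<in> I \<longrightarrow> r * x \<in> I \<and> x * r \<in> I)"

text \<open>Prime ideal: proper ideal P with AB \<subseteq> P implying A \<subseteq> P or B \<subseteq> P for ideals A, B
  (AB \<subseteq> P written out as containment of all products, P being additively closed).\<close>
definition prime_ideal :: "'a::ring_1 set \<Rightarrow> bool" where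
  "prime_ideal P \<longleftrightarrow> two_sided_ideal P \<and> P \<noteq> UNIV \<and>
     (\<forall>A B. two_sided_ideal A \<longrightarrow> two_sided_ideal B \<longrightarrow>
        (\<forall>a\<in>A. \<forall>b\<in>B. a * b \<in> P) \<longrightarrow> A \<subseteq> P \<or> B \<subseteq> P)"

definition prime_radical :: "'a::ring_1 itself \<Rightarrow> 'a set" where
  "prime_radical _ = \<Inter> {P :: 'a set. prime_ideal P}"

text \<open>Polynomials f = sum a_i x^i (i \<le> m) and g = sum b_j x^j (j \<le> n) in R[x] are
  represented by coefficient functions; f g = 0 means every coefficient of the product vanishes.\<close>
definition almost_armendariz :: "'a::ring_1 itself \<Rightarrow> bool" where
  "almost_armendariz T \<longleftrightarrow>
     (\<forall>(a :: nat \<Rightarrow> 'a) (b :: nat \<Rightarrow> 'a) (m::nat) (n::nat).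
        (\<forall>i>m. a i = 0) \<longrightarrow> (\<forall>j>n. b j = 0) \<longrightarrow>
        (\<forall>k. (\<Sum>i\<le>k. a i * b (k - i)) = 0) \<longrightarrow>
        (\<forall>i\<le>m. \<forall>j\<le>n. a i * b j \<in> prime_radical T))"

datatype 'a te = TE (te_r: 'a) (te_m: 'a)

instantiation te :: (ring_1) ring_1
begin
definition "0 = TE 0 0"
definition "1 = TE 1 0"
definition "x + y = TE (te_r x + te_r y) (te_m x + te_m y)"
definition "x - y = TE (te_r x - te_r y) (te_m x - te_m y)"
definition "- x = TE (- te_r x) (- te_m x)"
definition "x * y = TE (te_r x * te_r y) (te_r x * te_m y + te_m x * te_r y)"
instance
  by intro_classes
     (auto simp: zero_te_def one_te_def plus_te_def minus_te_def uminus_te_def times_te_def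
        algebra_simps te.expand)
end

end

theory Submission
  imports Defs
begin

text \<open>A reduced ring is Armendariz: if \<open>f g = 0\<close> then every product \<open>a\<^sub>i b\<^sub>j\<close> of coefficients
  vanishes. For \<open>R\<close> reduced, the projection \<open>T(R,R) \<rightarrow> R\<close> carries \<open>f g = 0\<close> to a zero product of
  polynomials over \<open>R\<close>, so each product of coefficients of \<open>f\<close> and \<open>g\<close> lies in the kernel
  \<open>0 \<oplus> R\<close>. That kernel is an ideal of square zero, hence contained in every prime ideal, i.e.
  in the prime radical.\<close>

lemma reduced_square_eq_zero:
  assumes "reduced TYPE('a::ring_1)" and "(x::'a) * x = 0"
  shows "x = 0"
  using assms unfolding reduced_def by (metis power2_eq_square)

lemma reduced_mult_eq_zero_commute:
  assumes red: "reduced TYPE('a::ring_1)" and "(x::'a) * y = 0"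
  shows "y * x = 0"
proof -
  have "(y * x) * (y * x) = y * (x * y) * x" by (simp add: mult.assoc)
  with assms have "(y * x) * (y * x) = 0" by simp
  then show ?thesis by (rule reduced_square_eq_zero[OF red])
qed

text \<open>Multiplying the \<open>k\<close>-th coefficient of \<open>f g\<close> on the right by \<open>a\<^sub>p\<close> kills every summand
  except \<open>a\<^sub>p b\<^sub>k\<^sub>-\<^sub>p a\<^sub>p\<close> (the later ones because \<open>a\<^sub>p b\<^sub>k\<^sub>-\<^sub>i = 0\<close> reverses to \<open>b\<^sub>k\<^sub>-\<^sub>i a\<^sub>p = 0\<close>),
  so \<open>(a\<^sub>p b\<^sub>k\<^sub>-\<^sub>p)\<^sup>2 = 0\<close>.\<close>

lemma reduced_coeff_product_eq_zero_step:
  fixes a b :: "nat \<Rightarrow> 'a::ring_1"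
  assumes red: "reduced TYPE('a)"
    and conv: "(\<Sum>i\<le>k. a i * b (k - i)) = 0"
    and lower_degree: "\<And>i j. i + j < k \<Longrightarrow> a i * b j = 0"
    and earlier: "\<And>i. i < p \<Longrightarrow> a i * b (k - i) = 0"
    and "p \<le> k"
  shows "a p * b (k - p) = 0"
proof -
  have others: "a i * b (k - i) * a p = 0" if "i \<le> k" "i \<noteq> p" for i
  proof (cases "i < p")
    case True
    then show ?thesis using earlier by simp
  next
    case False
    with that \<open>p \<le> k\<close> have "a p * b (k - i) = 0" by (intro lower_degree) simp
    then have "b (k - i) * a p = 0" by (rule reduced_mult_eq_zero_commute[OF red])
    then show ?thesis by (simp add: mult.assoc)
  qed
  have "0 = (\<Sum>i\<le>k. a i * b (k - i)) * a p" using conv by simp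
  also have "\<dots> = (\<Sum>i\<le>k. a i * b (k - i) * a p)" by (simp add: sum_distrib_right)
  also have "\<dots> = a p * b (k - p) * a p"
    using \<open>p \<le> k\<close> others by (subst sum.remove[of _ p]) (auto intro: sum.neutral)
  finally have "(a p * b (k - p)) * (a p * b (k - p)) = 0"
    by (metis mult.assoc mult_zero_left)
  then show ?thesis by (rule reduced_square_eq_zero[OF red])
qed

theorem reduced_armendariz:
  fixes a b :: "nat \<Rightarrow> 'a::ring_1"
  assumes red: "reduced TYPE('a)"
    and conv: "\<And>k. (\<Sum>i\<le>k. a i * b (k - i)) = 0"
  shows "a i * b j = 0"
proof -
  have "\<forall>i j. i + j = k \<longrightarrow> a i * b j = 0" for k
  proof (induction k rule: less_induct)
    case (less k)
    have lower_degree: "a i * b j = 0" if "i + j < k" for i j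
      using less.IH[OF that] by blast
    have "a p * b (k - p) = 0" if "p \<le> k" for p
      using that
    proof (induction p rule: less_induct)
      case (less p)
      show ?case
      proof (rule reduced_coeff_product_eq_zero_step[OF red conv lower_degree])
        show "a i * b (k - i) = 0" if "i < p" for i
          using less that by simp
      qed (use less in simp_all)
    qed
    then show ?case by (metis add_diff_cancel_left' le_add1)
  qed
  then show ?thesis by blast
qed

lemma square_zero_ideal_subset_prime_radical:
  fixes I :: "'a::ring_1 set"
  assumes "two_sided_ideal I" and "\<And>x y. x \<in> I \<Longrightarrow> y \<in> I \<Longrightarrow> x * y = 0"
  shows "I \<subseteq> prime_radical TYPE('a)"
proof -
  have "I \<subseteq> P" if "prime_ideal P" for P
  proof -
    from that have "0 \<in> P" by (simp add: prime_ideal_def two_sided_ideal_def)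
    with that assms show ?thesis unfolding prime_ideal_def by metis
  qed
  then show ?thesis unfolding prime_radical_def by blast
qed

lemma te_r_mult [simp]: "te_r (x * y) = te_r x * te_r (y :: 'a::ring_1 te)"
  by (simp add: times_te_def)

lemma te_r_sum: "te_r (sum f A) = (\<Sum>x\<in>A. te_r (f x :: 'a::ring_1 te))"
  by (induction A rule: infinite_finite_induct) (auto simp: zero_te_def plus_te_def)

lemma te_kernel_subset_prime_radical:
  "{TE 0 m | m::'a::ring_1. True} \<subseteq> prime_radical TYPE('a te)"
  by (rule square_zero_ideal_subset_prime_radical)
    (auto simp: two_sided_ideal_def zero_te_def plus_te_def uminus_te_def times_te_def)

theorem corollary2p2:
  assumes "reduced TYPE('a::ring_1)"
  shows "almost_armendariz TYPE('a te)"
  unfolding almost_armendariz_def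
proof (intro allI impI)
  fix a b :: "nat \<Rightarrow> 'a te" and m n i j :: nat
  assume conv: "\<forall>k. (\<Sum>i\<le>k. a i * b (k - i)) = 0"
  have "(\<Sum>i\<le>k. te_r (a i) * te_r (b (k - i))) = 0" for k
    using arg_cong[OF conv[rule_format, of k], of te_r] by (simp add: te_r_sum zero_te_def)
  then have "te_r (a i) * te_r (b j) = 0"
    using assms by (intro reduced_armendariz[where a = "\<lambda>i. te_r (a i)" and b = "\<lambda>j. te_r (b j)"])
  then have "a i * b j = TE 0 (te_m (a i * b j))" by (metis te.collapse te_r_mult)
  with te_kernel_subset_prime_radical show "a i * b j \<in> prime_radical TYPE('a te)" by blast
qed

end
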